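(* Let $0<\theta<\pi$ and $\hat T>\theta$, and let $(\hat x,\hat T,\hat u)$ be the reference solution of problem (MD) described in the context. Then for every $\lambda\in\Lambda$: (i) $\alpha_0>0$; (ii) $H_u[\lambda](s)<0$ for all $s\in[0,\theta/\hat T)$.
   Context: Problem (MD) on $s\in[0,1]$, with state $(x_1,x_2,x_3,T)$ and scalar control $u$: minimize $T(0)$ subject to $\dot x_1=-T\sin x_3$, $\dot x_2=T\cos x_3$, $\dot x_3=Tu$, $\dot T=0$ a.e. on $[0,1]$; $x_1(0)=x_2(0)=x_3(0)=0$; $x_1(1)=b_1$, $x_2(1)=b_2$, $x_3(1)=\theta$; $-1\le u(s)\le1$ a.e. (It is the time-rescaled form of minimizing the final time $T$ for $\dot x_1=-\sin x_3$, $\dot x_2=\cos x_3$, $\dot x_3=u$.) Reference solution: $\hat T>\theta$ constant, $\hat u(s)=1$ on $[0,\theta/\hat T]$, $\hat u(s)=0$ on $(\theta/\hat T,1]$; $\hat x_3(s)=\hat Ts$ on $[0,\theta/\hat T]$ and $=\theta$ afterwards; $\hat x_1(s)=\cos(\hat Ts)-1$ on $[0,\theta/\hat T]$ and $=\hat T\sin\theta(\theta/\hat T-s)+\cos\theta-1$ afterwards; $\hat x_2(s)=\sin(\hat Ts)$ on $[0,\theta/\hat T]$ and $=\hat T\cos\theta(s-\theta/\hat T)+\sin\theta$ afterwards; $b_1:=\hat x_1(1)$, $b_2:=\hat x_2(1)$. Pre-Hamiltonian: $H[\lambda](x,T,u,s):=T\big(-\psi_1(s)\sin x_3+\psi_2(s)\cos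 x_3+\psi_3(s)u\big)$. A multiplier is $\lambda=(\alpha_0,\beta^0,\beta^1,\psi,\psi_T)$ with $\alpha_0\in\mathbb R$, $\beta^0,\beta^1\in\mathbb R^3$, $\psi=(\psi_1,\psi_2,\psi_3)$ and $\psi_T$ Lipschitz on $[0,1]$; terminal Lagrangian $\ell:=\alpha_0T(0)+\sum_{j=1}^3\beta^0_jx_j(0)+\sum_{j=1}^3\beta^1_jx_j(1)$. $\Lambda$ is the set of such $\lambda$ with: $\alpha_0\ge0$, $\alpha_0+|\beta^0|+|\beta^1|=1$; $-\dot\psi=H_x[\lambda]$ a.e. along the reference, $\psi(0)=-\beta^0$, $\psi(1)=\beta^1$; $-\dot\psi_T=H_T[\lambda]$ a.e. along the reference, $\psi_T(0)=-\alpha_0$, $\psi_T(1)=0$; and $H[\lambda](\hat x(s),\hat T,\hat u(s),s)=\min_{|v|\le1}H[\lambda](\hat x(s),\hat T,v,s)$ for a.e. $s$. $H_u[\lambda](s)$ denotes $\partial H/\partial u$ along the reference, i.e. $\hat T\psi_3(s)$. *)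

theory Defs
  imports "HOL-Analysis.Analysis"
begin

definition H :: "real^3 \<Rightarrow> real^3 \<Rightarrow> real \<Rightarrow> real \<Rightarrow> real" where
  "H p x T u = T * (- p$1 * sin (x$3) + p$2 * cos (x$3) + p$3 * u)"

definition Hx :: "real^3 \<Rightarrow> real^3 \<Rightarrow> real \<Rightarrow> real \<Rightarrow> real^3" where
  "Hx p x T u = (\<chi> j. deriv (\<lambda>y. H p (\<chi> i. if i = j then y else x$i) T u) (x$j))"

definition HT :: "real^3 \<Rightarrow> real^3 \<Rightarrow> real \<Rightarrow> real \<Rightarrow> real" where
  "HT p x T u = deriv (\<lambda>t. H p x t u) T"

definition Hu :: "real^3 \<Rightarrow> real^3 \<Rightarrow> real \<Rightarrow> real \<Rightarrow> real" where
  "Hu p x T u = deriv (\<lambda>v. H p x T v) u"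

definition uhat :: "real \<Rightarrow> real \<Rightarrow> real \<Rightarrow> real" where
  "uhat th Th s = (if s \<le> th / Th then 1 else 0)"

definition xhat :: "real \<Rightarrow> real \<Rightarrow> real \<Rightarrow> real^3" where
  "xhat th Th s =
     (if s \<le> th / Th then
        vector [cos (Th * s) - 1, sin (Th * s), Th * s]
      else
        vector [Th * sin th * (th / Th - s) + cos th - 1,
                Th * cos th * (s - th / Th) + sin th,
                th])"

definition Lambda ::
  "real \<Rightarrow> real \<Rightarrow> (real \<times> (real^3) \<times> (real^3) \<times> (real \<Rightarrow> real^3) \<times> (real \<Rightarrow> real)) set" where
  "Lambda th Th = {(a0, b0, b1, psi, psiT) | a0 b0 b1 psi psiT.
     a0 \<ge> 0 \<and> a0 + norm b0 + norm b1 = 1 \<and>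
     (\<exists>C. C-lipschitz_on {0..1} psi) \<and> (\<exists>C. C-lipschitz_on {0..1} psiT) \<and>
     (AE s in lebesgue. s \<in> {0..1} \<longrightarrow>
        (psi has_vector_derivative
           (- Hx (psi s) (xhat th Th s) Th (uhat th Th s))) (at s)) \<and>
     psi 0 = - b0 \<and> psi 1 = b1 \<and>
     (AE s in lebesgue. s \<in> {0..1} \<longrightarrow>
        (psiT has_real_derivative
           (- HT (psi s) (xhat th Th s) Th (uhat th Th s))) (at s)) \<and>
     psiT 0 = - a0 \<and> psiT 1 = 0 \<and>
     (AE s in lebesgue. s \<in> {0..1} \<longrightarrow>
        (\<forall>v. \<bar>v\<bar> \<le> 1 \<longrightarrow>
           H (psi s) (xhat th Th s) Th (uhat th Th s) \<le> H (psi s) (xhat th Th s) Th v))}"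

end

theory Submission
  imports Defs
begin

(* The adjoint equations of problem (MD) along the reference solution say that
   psi_1, psi_2 are constant (= c1, c2), that psi_3' = Th (c1 cos x3 + c2 sin x3) and that
   psiT' = -(-c1 sin x3 + c2 cos x3 + psi_3 u).  On the singular arc (s > th/Th, u = 0) the
   minimum condition forces psi_3 = 0, so the linear function psi_3 vanishes there together
   with its slope; this gives c1 cos th + c2 sin th = 0 and psi_3(th/Th) = 0.  Integrating
   psiT over the bang and the singular arc with the boundary values psiT(0) = -a0,
   psiT(1) = 0 yields c1 sin th - c2 cos th = a0, hence c1 = a0 sin th, c2 = -a0 cos th and
   psi_3(s) = a0 (cos (th - Th s) - 1) on the bang arc.  If a0 = 0 then psi vanishes at both
   endpoints, contradicting the normalisation; so a0 > 0 and H_u = Th psi_3 < 0 on [0, th/Th). *)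

section \<open>Lipschitz functions with a.e.-known derivatives\<close>

text \<open>Images of points where the derivative vanishes are negligible (a one-dimensional
  instance of Sard's lemma); this is what makes derivative information off a null set
  sufficient.\<close>
lemma zero_deriv_image_negligible:
  fixes h :: "real \<Rightarrow> real"
  assumes "\<And>z. z \<in> Z \<Longrightarrow> (h has_real_derivative 0) (at z)"
  shows "negligible (h ` Z)"
proof -
  let ?h1 = "\<lambda>x::real^1. vec (h (x $ 1)) :: real^1"
  have der: "(?h1 has_derivative (*\<^sub>R) 0) (at x within vec ` Z)" if "x \<in> vec ` Z" for x
  proof -
    obtain z where z: "z \<in> Z" "x = vec z" using \<open>x \<in> vec ` Z\<close> by auto
    have "(h has_derivative (\<lambda>x. x * 0)) (at z within Z)"
      using assms[OF z(1)]
      by (simp only: has_field_derivative_def mult_commute_abs has_derivative_at_withinI)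
    from has_derivative_vector_1[of h "\<lambda>_. 0", OF this] show ?thesis by (simp add: z)
  qed
  have "matrix ((*\<^sub>R) (0::real) :: real^1 \<Rightarrow> real^1) = 0"
    unfolding matrix_def by (simp add: vec_eq_iff)
  then have "negligible (?h1 ` vec ` Z)"
    by (intro baby_Sard[of "vec ` Z" ?h1 "\<lambda>_. (*\<^sub>R) 0"]) (auto simp: der rank_0)
  moreover have "?h1 ` vec ` Z = vec ` h ` Z" by (auto simp: image_image)
  ultimately have "negligible (vec ` h ` Z :: (real^1) set)" by simp
  then have "negligible ((\<lambda>x::real^1. x $ 1) ` vec ` h ` Z)"
    by (rule negligible_differentiable_image_negligible[rotated])
       (auto intro!: bounded_linear_imp_differentiable_on bounded_linear_vec_nth)
  then show ?thesis by (simp add: image_image)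
qed

text \<open>The image of the interval is an interval which is covered by a negligible set (Lipschitz
  image of the null set, Sard image of the rest, two endpoints).\<close>
lemma lipschitz_ae_zero_derivative_const:
  fixes h :: "real \<Rightarrow> real"
  assumes ab: "a \<le> b" and lip: "C-lipschitz_on {a..b} h" and N: "negligible N"
    and der: "\<And>s. s \<in> {a<..<b} \<Longrightarrow> s \<notin> N \<Longrightarrow> (h has_real_derivative 0) (at s)"
  shows "h b = h a"
proof -
  have null_part: "negligible (h ` (N \<inter> {a..b}))"
  proof (rule negligible_locally_Lipschitz_image)
    show "negligible (N \<inter> {a..b})" using N negligible_Int by blast
    fix x assume "x \<in> N \<inter> {a..b}"
    then show "\<exists>T B. open T \<and> x \<in> T \<and> (\<forall>y\<in>(N \<inter> {a..b}) \<inter> T. norm (h y - h x) \<le> B * norm (y - x))"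
      using lipschitz_onD[OF lip] by (intro exI[of _ UNIV] exI[of _ C]) (auto simp: dist_norm)
  qed auto
  have regular_part: "negligible (h ` ({a<..<b} - N))"
    by (rule zero_deriv_image_negligible) (auto intro: der)
  have "h ` {a..b} \<subseteq> h ` (N \<inter> {a..b}) \<union> h ` ({a<..<b} - N) \<union> {h a, h b}"
    by (force simp: less_le)
  then have "negligible (h ` {a..b})"
    by (rule negligible_subset[rotated]) (use null_part regular_part in auto)
  moreover obtain c d where cd: "h ` {a..b} = {c..d}" "c \<le> d"
    using continuous_image_closed_interval[OF ab lipschitz_on_continuous_on[OF lip]] by blast
  ultimately have "negligible (cbox c d)" by simp
  then have "box c d = {}" by (simp only: negligible_interval)
  then have "c = d" using cd(2) by (auto simp: box_real)
  moreover have "h a \<in> {c..d}" "h b \<in> {c..d}" using cd(1) ab by auto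
  ultimately show ?thesis by auto
qed

lemma lipschitz_ae_ftc:
  fixes f G g :: "real \<Rightarrow> real"
  assumes ab: "a \<le> b" and lip: "C-lipschitz_on S f" and sub: "{a..b} \<subseteq> S"
    and N: "negligible N"
    and der: "\<And>s. s \<in> {a<..<b} \<Longrightarrow> s \<notin> N \<Longrightarrow> (f has_real_derivative g s) (at s)"
    and derG: "\<And>s. (G has_real_derivative g s) (at s)"
    and bound: "\<And>s. s \<in> {a..b} \<Longrightarrow> \<bar>g s\<bar> \<le> D"
  shows "f b = f a + (G b - G a)"
proof -
  have "D-lipschitz_on {a..b} G"
  proof (rule bounded_derivative_imp_lipschitz[where f' = "\<lambda>s. (*) (g s)"])
    fix x assume x: "x \<in> {a..b}"
    show "(G has_derivative (*) (g x)) (at x within {a..b})"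
      using derG[of x] by (simp add: has_field_derivative_def has_derivative_at_withinI)
    show "onorm ((*) (g x)) \<le> D"
      by (rule onorm_le) (use bound[OF x] in \<open>auto simp: abs_mult intro: mult_right_mono\<close>)
  qed (use bound[of a] ab in auto)
  then have "(C + D)-lipschitz_on {a..b} (\<lambda>s. f s - G s)"
    by (rule lipschitz_on_diff[OF lipschitz_on_subset[OF lip sub]])
  then have "(\<lambda>s. f s - G s) b = (\<lambda>s. f s - G s) a"
    by (rule lipschitz_ae_zero_derivative_const[OF ab _ N])
       (use DERIV_diff[OF der derG] in fastforce)
  then show ?thesis by simp
qed

corollary lipschitz_ae_const_derivative:
  fixes f :: "real \<Rightarrow> real"
  assumes "a \<le> b" "C-lipschitz_on S f" "{a..b} \<subseteq> S" "negligible N"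
    and "\<And>s. s \<in> {a<..<b} \<Longrightarrow> s \<notin> N \<Longrightarrow> (f has_real_derivative L) (at s)"
  shows "f b = f a + L * (b - a)"
proof -
  have "f b = f a + (L * b - L * a)"
    by (rule lipschitz_ae_ftc[OF assms, of "\<lambda>s. L * s" "\<bar>L\<bar>"])
       (auto intro!: derivative_eq_intros)
  then show ?thesis by (simp add: algebra_simps)
qed

lemma lipschitz_on_vec_nth:
  fixes f :: "real \<Rightarrow> real^'n"
  assumes "C-lipschitz_on S f"
  shows "C-lipschitz_on S (\<lambda>s. f s $ i)"
proof (rule lipschitz_onI)
  show "0 \<le> C" using assms lipschitz_on_nonneg by blast
  fix x y assume "x \<in> S" "y \<in> S"
  have "dist (f x $ i) (f y $ i) \<le> dist (f x) (f y)" by (rule dist_vec_nth_le)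
  also have "\<dots> \<le> C * dist x y" using lipschitz_onD[OF assms \<open>x \<in> S\<close> \<open>y \<in> S\<close>] .
  finally show "dist (f x $ i) (f y $ i) \<le> C * dist x y" .
qed

lemma has_real_derivative_vec_nth:
  fixes f :: "real \<Rightarrow> real^'n"
  assumes "(f has_vector_derivative D) (at s)"
  shows "((\<lambda>s. f s $ i) has_real_derivative D $ i) (at s)"
  using bounded_linear.has_vector_derivative[OF bounded_linear_vec_nth assms, of i]
  by (simp add: has_real_derivative_iff_has_vector_derivative)

text \<open>A nonempty open interval is not negligible, so it contains points of any prescribed
  co-null set; used to pick regular points on the singular arc.\<close>
lemma exists_outside_negligible:
  fixes c d :: real
  assumes "c < d" "negligible N"
  obtains x where "c < x" "x < d" "x \<notin> N"
proof -
  have "box c d \<noteq> {}" using assms(1) by (auto simp: box_real)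
  then have "\<not> negligible (box c d)" using negligible_interval(2) by blast
  then have "\<not> {c<..<d} \<subseteq> N" using assms(2) negligible_subset by (auto simp: box_real)
  then obtain x where "x \<in> {c<..<d}" "x \<notin> N" by blast
  then show ?thesis by (auto intro: that)
qed

lemma Hx_eq: "Hx p x T u = vector [0, 0, T * (- p$1 * cos (x$3) - p$2 * sin (x$3))]"
  unfolding Hx_def
  by (simp add: vec_eq_iff forall_3 H_def, intro conjI DERIV_imp_deriv)
     (auto intro!: derivative_eq_intros)

lemma HT_eq: "HT p x T u = - p$1 * sin (x$3) + p$2 * cos (x$3) + p$3 * u"
  unfolding HT_def H_def by (intro DERIV_imp_deriv) (auto intro!: derivative_eq_intros)

lemma Hu_eq: "Hu p x T u = T * p$3"
  unfolding Hu_def H_def by (intro DERIV_imp_deriv) (auto intro!: derivative_eq_intros)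

section \<open>Multipliers of the reference solution\<close>

locale MD_multiplier =
  fixes th Th a0 :: real and b0 b1 :: "real^3"
    and psi :: "real \<Rightarrow> real^3" and psiT :: "real \<Rightarrow> real"
  assumes th_pos: "0 < th" and th_less_Th: "th < Th"
    and multiplier: "(a0, b0, b1, psi, psiT) \<in> Lambda th Th"
begin

definition switch :: real where "switch = th / Th"

lemma Th_pos: "0 < Th"
  using th_pos th_less_Th by linarith

lemma switch_pos: "0 < switch" and switch_less_1: "switch < 1" and Th_switch: "Th * switch = th"
  using th_pos th_less_Th Th_pos by (auto simp: switch_def field_simps)

lemma uhat_eq: "uhat th Th s = (if s \<le> switch then 1 else 0)"
  by (simp add: uhat_def switch_def)

lemma xhat3_eq: "xhat th Th s $ 3 = (if s \<le> switch then Th * s else th)"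
  by (simp add: xhat_def switch_def)

lemma multiplier_data:
  "0 \<le> a0" "a0 + norm b0 + norm b1 = 1" "psi 0 = - b0" "psi 1 = b1"
  "psiT 0 = - a0" "psiT 1 = 0"
  "\<exists>C. C-lipschitz_on {0..1} psi" "\<exists>C. C-lipschitz_on {0..1} psiT"
  using multiplier unfolding Lambda_def by auto

definition exceptional :: "real set" where
  "exceptional = {s \<in> {0..1}. \<not> (
     (psi has_vector_derivative (- Hx (psi s) (xhat th Th s) Th (uhat th Th s))) (at s) \<and>
     (psiT has_real_derivative (- HT (psi s) (xhat th Th s) Th (uhat th Th s))) (at s) \<and>
     (\<forall>v. \<bar>v\<bar> \<le> 1 \<longrightarrow>
        H (psi s) (xhat th Th s) Th (uhat th Th s) \<le> H (psi s) (xhat th Th s) Th v))}"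

lemma negligible_exceptional: "negligible exceptional"
proof -
  have "AE s in lebesgue. s \<in> {0..1} \<longrightarrow>
          (psi has_vector_derivative (- Hx (psi s) (xhat th Th s) Th (uhat th Th s))) (at s)"
    "AE s in lebesgue. s \<in> {0..1} \<longrightarrow>
          (psiT has_real_derivative (- HT (psi s) (xhat th Th s) Th (uhat th Th s))) (at s)"
    "AE s in lebesgue. s \<in> {0..1} \<longrightarrow> (\<forall>v. \<bar>v\<bar> \<le> 1 \<longrightarrow>
          H (psi s) (xhat th Th s) Th (uhat th Th s) \<le> H (psi s) (xhat th Th s) Th v)"
    using multiplier unfolding Lambda_def by auto
  then have "AE s in lebesgue. s \<notin> exceptional"
    unfolding exceptional_def by eventually_elim auto
  then obtain N where "negligible N" "exceptional \<subseteq> N"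
    unfolding eventually_ae_filter_negligible by auto
  then show ?thesis using negligible_subset by blast
qed

lemma psi_derivatives:
  assumes "s \<in> {0..1}" "s \<notin> exceptional"
  shows "((\<lambda>r. psi r $ 1) has_real_derivative 0) (at s)"
    and "((\<lambda>r. psi r $ 2) has_real_derivative 0) (at s)"
    and "((\<lambda>r. psi r $ 3) has_real_derivative
           Th * (psi s $ 1 * cos (xhat th Th s $ 3) + psi s $ 2 * sin (xhat th Th s $ 3))) (at s)"
proof -
  have "(psi has_vector_derivative (- Hx (psi s) (xhat th Th s) Th (uhat th Th s))) (at s)"
    using assms unfolding exceptional_def by auto
  from has_real_derivative_vec_nth[OF this, of 1] has_real_derivative_vec_nth[OF this, of 2]
    has_real_derivative_vec_nth[OF this, of 3] show
    "((\<lambda>r. psi r $ 1) has_real_derivative 0) (at s)"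
    "((\<lambda>r. psi r $ 2) has_real_derivative 0) (at s)"
    "((\<lambda>r. psi r $ 3) has_real_derivative
       Th * (psi s $ 1 * cos (xhat th Th s $ 3) + psi s $ 2 * sin (xhat th Th s $ 3))) (at s)"
    by (simp_all add: Hx_eq algebra_simps)
qed

lemma psiT_derivative:
  assumes "s \<in> {0..1}" "s \<notin> exceptional"
  shows "(psiT has_real_derivative - (- psi s $ 1 * sin (xhat th Th s $ 3)
           + psi s $ 2 * cos (xhat th Th s $ 3) + psi s $ 3 * uhat th Th s)) (at s)"
  using assms unfolding exceptional_def by (auto simp: HT_eq)

text \<open>On the singular arc u = 0 lies inside the control set, so minimality of
  v \<mapsto> Th psi_3 v on [-1,1] at v = 0 forces psi_3 = 0.\<close>
lemma psi3_zero_on_singular_arc: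
  assumes "s \<in> {0..1}" "s \<notin> exceptional" "switch < s"
  shows "psi s $ 3 = 0"
proof -
  have "Th * (psi s $ 3 * 0) \<le> Th * (psi s $ 3 * v)" if "\<bar>v\<bar> \<le> 1" for v
    using assms that unfolding exceptional_def H_def uhat_eq by (auto simp: algebra_simps)
  from this[of 1] this[of "-1"] show ?thesis
    using Th_pos by (simp add: zero_le_mult_iff mult_le_0_iff)
qed

lemma component_lipschitz: "\<exists>C. C-lipschitz_on {0..1} (\<lambda>s. psi s $ i)"
  using multiplier_data(7) lipschitz_on_vec_nth by blast

text \<open>The constant values of psi_1, psi_2 and the integration constant of psi_3 on the bang arc.\<close>
definition c1 :: real where "c1 = psi 0 $ 1"
definition c2 :: real where "c2 = psi 0 $ 2"
definition K :: real where "K = psi 0 $ 3 + c2"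

lemma psi12_const:
  assumes "i = 1 \<or> i = 2" and s: "s \<in> {0..1}"
  shows "psi s $ i = psi 0 $ i"
proof -
  obtain C where C: "C-lipschitz_on {0..1} (\<lambda>s. psi s $ i)" using component_lipschitz by blast
  have "psi s $ i = psi 0 $ i + 0 * (s - 0)"
  proof (rule lipschitz_ae_const_derivative[OF _ C _ negligible_exceptional])
    fix r assume "r \<in> {0<..<s}" "r \<notin> exceptional"
    then show "((\<lambda>s. psi s $ i) has_real_derivative 0) (at r)"
      using assms psi_derivatives(1,2)[of r] s by auto
  qed (use s in auto)
  then show ?thesis by simp
qed

lemma psi1_const: "s \<in> {0..1} \<Longrightarrow> psi s $ 1 = c1"
  and psi2_const: "s \<in> {0..1} \<Longrightarrow> psi s $ 2 = c2"
  unfolding c1_def c2_def by (blast intro: psi12_const)+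

text \<open>On the bang arc x3 = Th s, so psi_3 is a sinusoid.\<close>
lemma psi3_bang_arc:
  assumes s: "s \<in> {0..switch}"
  shows "psi s $ 3 = c1 * sin (Th * s) - c2 * cos (Th * s) + K"
proof -
  obtain C where C: "C-lipschitz_on {0..1} (\<lambda>s. psi s $ 3)" using component_lipschitz by blast
  have "psi s $ 3 = psi 0 $ 3 + ((c1 * sin (Th * s) - c2 * cos (Th * s)) - (c1 * sin (Th * 0) - c2 * cos (Th * 0)))"
  proof (rule lipschitz_ae_ftc[OF _ C _ negligible_exceptional,
        where g = "\<lambda>r. Th * (c1 * cos (Th * r) + c2 * sin (Th * r))" and D = "Th * (\<bar>c1\<bar> + \<bar>c2\<bar>)"])
    fix r assume "r \<in> {0<..<s}" "r \<notin> exceptional"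
    moreover from this have "r \<in> {0..1}" "r \<le> switch" using s switch_less_1 by auto
    ultimately show "((\<lambda>s. psi s $ 3) has_real_derivative Th * (c1 * cos (Th * r) + c2 * sin (Th * r))) (at r)"
      using psi_derivatives(3)[of r] by (simp add: psi1_const psi2_const xhat3_eq)
  next
    fix r :: real
    have "\<bar>c1 * cos (Th * r)\<bar> \<le> \<bar>c1\<bar>" "\<bar>c2 * sin (Th * r)\<bar> \<le> \<bar>c2\<bar>"
      by (simp_all add: abs_mult mult_left_le)
    then have "\<bar>c1 * cos (Th * r) + c2 * sin (Th * r)\<bar> \<le> \<bar>c1\<bar> + \<bar>c2\<bar>"
      using abs_triangle_ineq order_trans add_mono by metis
    then show "\<bar>Th * (c1 * cos (Th * r) + c2 * sin (Th * r))\<bar> \<le> Th * (\<bar>c1\<bar> + \<bar>c2\<bar>)"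
      using Th_pos by (simp add: abs_mult)
  next
    show "\<And>r. ((\<lambda>s. c1 * sin (Th * s) - c2 * cos (Th * s)) has_real_derivative
             Th * (c1 * cos (Th * r) + c2 * sin (Th * r))) (at r)"
      by (auto intro!: derivative_eq_intros simp: algebra_simps)
  qed (use s switch_less_1 in auto)
  then show ?thesis by (simp add: K_def)
qed

text \<open>On the singular arc x3 = th, so psi_3 is affine; it vanishes almost everywhere there,
  hence both its slope and its value at the switching time vanish.\<close>
lemma psi3_singular_arc:
  assumes s: "s \<in> {switch..1}"
  shows "psi s $ 3 = psi switch $ 3 + Th * (c1 * cos th + c2 * sin th) * (s - switch)"
proof -
  obtain C where C: "C-lipschitz_on {0..1} (\<lambda>s. psi s $ 3)" using component_lipschitz by blast
  show ?thesis
  proof (rule lipschitz_ae_const_derivative[OF _ C _ negligible_exceptional])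
    fix r assume "r \<in> {switch<..<s}" "r \<notin> exceptional"
    moreover from this have "r \<in> {0..1}" "\<not> r \<le> switch" using s switch_pos by auto
    ultimately show "((\<lambda>s. psi s $ 3) has_real_derivative Th * (c1 * cos th + c2 * sin th)) (at r)"
      using psi_derivatives(3)[of r] by (simp add: psi1_const psi2_const xhat3_eq)
  qed (use s switch_pos in auto)
qed

lemma switching_conditions:
  "c1 * cos th + c2 * sin th = 0" "psi switch $ 3 = 0"
proof -
  define L where "L = Th * (c1 * cos th + c2 * sin th)"
  have vanish: "psi switch $ 3 + L * (r - switch) = 0"
    if "switch < r" "r < 1" "r \<notin> exceptional" for r
    using psi3_singular_arc[of r] psi3_zero_on_singular_arc[of r] that switch_pos
    by (simp add: L_def)
  obtain r1 where r1: "switch < r1" "r1 < (switch + 1) / 2" "r1 \<notin> exceptional"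
    using exists_outside_negligible[OF _ negligible_exceptional, of switch "(switch + 1) / 2"]
      switch_less_1 by auto
  obtain r2 where r2: "(switch + 1) / 2 < r2" "r2 < 1" "r2 \<notin> exceptional"
    using exists_outside_negligible[OF _ negligible_exceptional, of "(switch + 1) / 2" 1]
      switch_less_1 by auto
  have "L * (r2 - r1) = (psi switch $ 3 + L * (r2 - switch)) - (psi switch $ 3 + L * (r1 - switch))"
    by (simp add: algebra_simps)
  also have "\<dots> = 0" using vanish[of r1] vanish[of r2] r1 r2 by simp
  finally have "L * (r2 - r1) = 0" .
  then have "L = 0" using r1 r2 by simp
  then show "c1 * cos th + c2 * sin th = 0" "psi switch $ 3 = 0"
    using vanish[of r1] r1 Th_pos by (auto simp: L_def)
qed

lemma psi3_zero_after_switch: "s \<in> {switch..1} \<Longrightarrow> psi s $ 3 = 0"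
  using psi3_singular_arc switching_conditions by simp

lemma bang_arc_at_switch: "c1 * sin th - c2 * cos th + K = 0"
  using psi3_bang_arc[of switch] switching_conditions(2) switch_pos Th_switch by simp

text \<open>Since psiT' = -H/Th, psiT has the constant slope -K on both arcs (the Hamiltonian is
  constant along the reference); psiT(0) = -a0 and psiT(1) = 0 then identify K = -a0.\<close>
lemma K_eq: "K = - a0"
proof -
  obtain C where C: "C-lipschitz_on {0..1} psiT" using multiplier_data(8) by blast
  have bang: "psiT switch = psiT 0 + (- K) * (switch - 0)"
  proof (rule lipschitz_ae_const_derivative[OF _ C _ negligible_exceptional])
    fix r assume "r \<in> {0<..<switch}" "r \<notin> exceptional"
    moreover from this have "r \<in> {0..1}" "r \<le> switch" using switch_less_1 by auto
    ultimately show "(psiT has_real_derivative - K) (at r)"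
      using psiT_derivative[of r] psi3_bang_arc[of r]
      by (simp add: psi1_const psi2_const xhat3_eq uhat_eq)
  qed (use switch_pos switch_less_1 in auto)
  have slope: "- K = c1 * sin th - c2 * cos th" using bang_arc_at_switch by simp
  have singular: "psiT 1 = psiT switch + (- K) * (1 - switch)"
  proof (rule lipschitz_ae_const_derivative[OF _ C _ negligible_exceptional])
    fix r assume "r \<in> {switch<..<1}" "r \<notin> exceptional"
    moreover from this have "r \<in> {0..1}" "\<not> r \<le> switch" using switch_pos by auto
    ultimately show "(psiT has_real_derivative - K) (at r)"
      using psiT_derivative[of r] psi3_zero_after_switch[of r] unfolding slope
      by (simp add: psi1_const psi2_const xhat3_eq uhat_eq)
  qed (use switch_pos switch_less_1 in auto)
  show ?thesis
    using bang singular multiplier_data(5,6) by (simp add: algebra_simps)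
qed

text \<open>Solving the 2x2 rotation system for (c1, c2).\<close>
lemma c1_eq: "c1 = a0 * sin th" and c2_eq: "c2 = - a0 * cos th"
proof -
  have E1: "c1 * sin th - c2 * cos th = a0" using bang_arc_at_switch K_eq by simp
  have E2: "c1 * cos th + c2 * sin th = 0" by (rule switching_conditions(1))
  have "c1 = sin th * (c1 * sin th - c2 * cos th) + cos th * (c1 * cos th + c2 * sin th)"
    "c2 = - cos th * (c1 * sin th - c2 * cos th) + sin th * (c1 * cos th + c2 * sin th)"
    using sin_cos_squared_add[of th] by (simp_all add: algebra_simps power2_eq_square flip: distrib_left)
  then show "c1 = a0 * sin th" "c2 = - a0 * cos th" unfolding E1 E2 by simp_all
qed

lemma psi3_bang_arc_explicit:
  "s \<in> {0..switch} \<Longrightarrow> psi s $ 3 = a0 * (cos (th - Th * s) - 1)"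
  using psi3_bang_arc by (simp add: c1_eq c2_eq K_eq cos_diff algebra_simps)

text \<open>Nontriviality: a0 = 0 would force c1 = c2 = K = 0, hence psi(0) = psi(1) = 0 and
  b0 = b1 = 0, contradicting a0 + |b0| + |b1| = 1.\<close>
lemma a0_pos: "0 < a0"
proof (rule ccontr)
  assume "\<not> 0 < a0"
  then have a0: "a0 = 0" using multiplier_data(1) by simp
  have "psi 0 = 0"
    using psi1_const[of 0] psi2_const[of 0] K_eq
    by (simp add: vec_eq_iff forall_3 c1_eq c2_eq a0 K_def)
  moreover have "psi 1 = 0"
    using psi1_const[of 1] psi2_const[of 1] psi3_zero_after_switch[of 1] switch_less_1
    by (simp add: vec_eq_iff forall_3 c1_eq c2_eq a0)
  ultimately show False using multiplier_data(2-4) a0 by simp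
qed

lemma Hu_negative_on_bang_arc:
  assumes "th < pi" and s: "s \<in> {0..<switch}"
  shows "Hu (psi s) (xhat th Th s) Th (uhat th Th s) < 0"
proof -
  have "0 \<le> Th * s" "Th * s < th"
    using s Th_pos Th_switch mult_strict_left_mono[of s switch Th] by auto
  then have "0 < th - Th * s" "th - Th * s \<le> pi" using assms(1) by auto
  then have "cos (th - Th * s) < cos 0" by (intro cos_monotone_0_pi) auto
  then have "psi s $ 3 < 0"
    using psi3_bang_arc_explicit[of s] s a0_pos by (simp add: mult_pos_neg)
  then show ?thesis using Th_pos by (simp add: Hu_eq mult_pos_neg)
qed

end

theorem mainTheorem15:
  fixes th Th :: real
  assumes "0 < th" and "th < pi" and "th < Th"
    and "(a0, b0, b1, psi, psiT) \<in> Lambda th Th"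
  shows "a0 > 0 \<and>
    (\<forall>s \<in> {0..<th / Th}. Hu (psi s) (xhat th Th s) Th (uhat th Th s) < 0)"
proof -
  interpret MD_multiplier th Th a0 b0 b1 psi psiT
    using assms by unfold_locales
  show ?thesis
    using a0_pos Hu_negative_on_bang_arc[OF assms(2)] by (simp add: switch_def)
qed

end
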